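(* Let $K$ be a field and $\lambda\in K$ transcendental over the prime field of $K$. Let $q\ge1$ be an integer, and if the characteristic $p$ of $K$ is positive suppose $p$ does not divide $q$. Let $P(z)\in K[z]$ be either $\lambda z(1+z^q)$ or $\lambda z(1+z^q+z^{2q})$. Then $P$ has no parabolic periodic point.
   Context: A periodic point $z_0\in K$ of $P$ of period $n$ (i.e. $P^n(z_0)=z_0$) is parabolic if its multiplier $(P^n)'(z_0)$ is a root of unity. *)

theory Defs
  imports "HOL-Computational_Algebra.Polynomial"
begin

text \<open>Every polynomial over the
  prime field is (up to a nonzero scalar) the image of an integer polynomial.\<close>
definition transcendental_over_prime_field :: "'a::field \<Rightarrow> bool" where
  "transcendental_over_prime_field l \<longleftrightarrow>
     (\<forall>p :: int poly. map_poly of_int p \<noteq> (0 :: 'a poly) \<longrightarrow> poly (map_poly of_int p) l \<noteq> 0)"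

definition poly_iter :: "'a::comm_ring_1 poly \<Rightarrow> nat \<Rightarrow> 'a poly" where
  "poly_iter P n = ((\<lambda>Q. pcompose P Q) ^^ n) [:0, 1:]"

definition root_of_unity :: "'a::field \<Rightarrow> bool" where
  "root_of_unity w \<longleftrightarrow> (\<exists>m::nat. m > 0 \<and> w ^ m = 1)"

definition parabolic_periodic_point :: "'a::field poly \<Rightarrow> 'a \<Rightarrow> bool" where
  "parabolic_periodic_point P z0 \<longleftrightarrow>
     (\<exists>n::nat. n \<ge> 1 \<and> poly (poly_iter P n) z0 = z0 \<and>
        root_of_unity (poly (pderiv (poly_iter P n)) z0))"

end

theory Submission
  imports Defs
begin

text \<open>
  Take a valuation ring \<open>R\<close> of \<open>K\<close> in which \<open>\<lambda>\<close> is a pole and the nonzero integers are units: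
  a subring containing \<open>1/\<lambda>\<close> and the inverses of the nonzero integers, maximal among those
  avoiding \<open>\<lambda>\<close> (Zorn; transcendence of \<open>\<lambda>\<close> makes the family nonempty), is such a ring.
  Points outside \<open>R\<close> escape: if \<open>z \<notin> R\<close> then \<open>1/P(z)\<close> is \<open>1/z\<close> times an element of the
  maximal ideal, so the orbit of \<open>z\<close> never returns, and every periodic orbit lies in \<open>R\<close>.
  Whenever \<open>z\<close> and \<open>P(z)\<close> lie in \<open>R\<close>, \<open>P'(z)\<close> is \<open>\<lambda>\<close> times a unit of \<open>R\<close>, so the multiplier
  of an \<open>n\<close>-cycle is \<open>\<lambda>^n\<close> times a unit and cannot be a root of unity.  The exception is
  \<open>\<lambda>z(1 + z^q + z^2q)\<close> in characteristic 3, where \<open>P = \<lambda>z(1 - z^q)^2\<close> and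
  \<open>P' = \<lambda>(1 - z^q)(1 + (q-1)z^q)\<close>: since the factors \<open>P(z_i)/z_i\<close> along a cycle multiply
  to 1, the square of the multiplier is again \<open>\<lambda>^n\<close> times a unit.
\<close>

locale subring =
  fixes R :: "'a::comm_ring_1 set"
  assumes zero_mem: "0 \<in> R" and one_mem: "1 \<in> R"
    and add_mem: "x \<in> R \<Longrightarrow> y \<in> R \<Longrightarrow> x + y \<in> R"
    and mult_mem: "x \<in> R \<Longrightarrow> y \<in> R \<Longrightarrow> x * y \<in> R"
    and uminus_mem: "x \<in> R \<Longrightarrow> - x \<in> R"

definition polys_over :: "'a::zero set \<Rightarrow> 'a poly set" where
  "polys_over R = {p. \<forall>i. coeff p i \<in> R}"

definition ring_adjoin :: "'a::comm_ring_1 set \<Rightarrow> 'a \<Rightarrow> 'a set" where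
  "ring_adjoin R x = (\<lambda>p. poly p x) ` polys_over R"

context subring
begin

lemma diff_mem: "x \<in> R \<Longrightarrow> y \<in> R \<Longrightarrow> x - y \<in> R"
  using add_mem[of x "- y"] uminus_mem[of y] by simp

lemma sum_mem: "(\<And>i. i \<in> A \<Longrightarrow> f i \<in> R) \<Longrightarrow> sum f A \<in> R"
  by (induction A rule: infinite_finite_induct) (auto intro: zero_mem add_mem)

lemma power_mem: "x \<in> R \<Longrightarrow> x ^ n \<in> R"
  by (induction n) (auto intro: one_mem mult_mem)

lemma of_nat_mem: "of_nat n \<in> R"
  by (induction n) (auto intro: zero_mem one_mem add_mem)

lemma polys_over_const: "c \<in> R \<Longrightarrow> [:c:] \<in> polys_over R"
  by (auto simp: polys_over_def coeff_pCons zero_mem split: nat.split)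

lemma polys_over_monom: "c \<in> R \<Longrightarrow> monom c n \<in> polys_over R"
  by (auto simp: polys_over_def coeff_monom zero_mem)

lemma polys_over_add: "p \<in> polys_over R \<Longrightarrow> q \<in> polys_over R \<Longrightarrow> p + q \<in> polys_over R"
  by (simp add: polys_over_def add_mem)

lemma polys_over_uminus: "p \<in> polys_over R \<Longrightarrow> - p \<in> polys_over R"
  by (simp add: polys_over_def uminus_mem)

lemma polys_over_diff: "p \<in> polys_over R \<Longrightarrow> q \<in> polys_over R \<Longrightarrow> p - q \<in> polys_over R"
  by (simp add: polys_over_def diff_mem)

lemma polys_over_smult: "c \<in> R \<Longrightarrow> p \<in> polys_over R \<Longrightarrow> smult c p \<in> polys_over R"
  by (simp add: polys_over_def mult_mem)

lemma polys_over_mult: "p \<in> polys_over R \<Longrightarrow> q \<in> polys_over R \<Longrightarrow> p * q \<in> polys_over R"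
  by (auto simp: polys_over_def coeff_mult intro!: sum_mem mult_mem)

lemma polys_over_sum: "(\<And>i. i \<in> A \<Longrightarrow> f i \<in> polys_over R) \<Longrightarrow> sum f A \<in> polys_over R"
  by (induction A rule: infinite_finite_induct)
    (auto intro: polys_over_const[OF zero_mem, simplified] polys_over_add)

lemma polys_over_reflect_poly: "p \<in> polys_over R \<Longrightarrow> reflect_poly p \<in> polys_over R"
  by (simp add: polys_over_def coeff_reflect_poly zero_mem)

lemma poly_mem: "p \<in> polys_over R \<Longrightarrow> x \<in> R \<Longrightarrow> poly p x \<in> R"
  unfolding poly_altdef polys_over_def by (auto intro!: sum_mem mult_mem power_mem)

lemma subring_ring_adjoin: "subring (ring_adjoin R x)"
proof
  show "0 \<in> ring_adjoin R x" "1 \<in> ring_adjoin R x"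
    using polys_over_const[OF zero_mem] polys_over_const[OF one_mem]
    by (force simp: ring_adjoin_def one_pCons)+
next
  fix a b assume "a \<in> ring_adjoin R x" "b \<in> ring_adjoin R x"
  then obtain p p' where pp': "p \<in> polys_over R" "p' \<in> polys_over R" "a = poly p x" "b = poly p' x"
    by (auto simp: ring_adjoin_def)
  show "a + b \<in> ring_adjoin R x"
    using pp' unfolding ring_adjoin_def by (auto intro!: image_eqI[where x = "p + p'"] polys_over_add)
  show "a * b \<in> ring_adjoin R x"
    using pp' unfolding ring_adjoin_def by (auto intro!: image_eqI[where x = "p * p'"] polys_over_mult)
next
  fix a assume "a \<in> ring_adjoin R x"
  then show "- a \<in> ring_adjoin R x"
    by (auto simp: ring_adjoin_def intro!: image_eqI[where x = "- p" for p] polys_over_uminus)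
qed

lemma subset_ring_adjoin: "R \<subseteq> ring_adjoin R x"
  using polys_over_const by (force simp: ring_adjoin_def)

lemma mem_ring_adjoin: "x \<in> ring_adjoin R x"
  using polys_over_monom[OF one_mem, of 1] by (force simp: ring_adjoin_def poly_monom)

end

lemma subring_Ints: "subring \<int>"
  by unfold_locales auto

lemma subring_Union_chain:
  assumes "C \<noteq> {}" "\<And>S. S \<in> C \<Longrightarrow> subring S" "\<And>S T. S \<in> C \<Longrightarrow> T \<in> C \<Longrightarrow> S \<subseteq> T \<or> T \<subseteq> S"
  shows "subring (\<Union>C)"
proof
  show "0 \<in> \<Union>C" "1 \<in> \<Union>C"
    using assms(1,2) subring.zero_mem subring.one_mem by blast+
  show "- x \<in> \<Union>C" if "x \<in> \<Union>C" for x
    using that assms(2) subring.uminus_mem by blast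
  fix x y assume "x \<in> \<Union>C" "y \<in> \<Union>C"
  then obtain S where "S \<in> C" "x \<in> S" "y \<in> S"
    using assms(3) by blast
  then show "x + y \<in> \<Union>C" "x * y \<in> \<Union>C"
    using assms(2) subring.add_mem subring.mult_mem by blast+
qed

lemma poly_eq_sum_atMost:
  fixes p :: "'a::comm_semiring_1 poly"
  assumes "degree p \<le> n"
  shows "poly p x = (\<Sum>i\<le>n. coeff p i * x ^ i)"
  unfolding poly_altdef using assms
  by (intro sum.mono_neutral_left) (auto simp: coeff_eq_0)

section \<open>Maximal subrings containing \<open>1/\<lambda>\<close> but not \<open>\<lambda>\<close> are valuation rings\<close>

locale maximal_subring_avoiding = subring R for R :: "'a::field set" and l :: 'a +
  assumes inverse_mem: "inverse l \<in> R"
    and avoids: "l \<notin> R"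
    and maximal: "subring S \<Longrightarrow> R \<subseteq> S \<Longrightarrow> l \<notin> S \<Longrightarrow> S = R"
begin

lemma nonzero: "l \<noteq> 0"
  using avoids zero_mem by auto

lemma mem_ring_adjoin_if_notin: "x \<notin> R \<Longrightarrow> l \<in> ring_adjoin R x"
  using maximal[OF subring_ring_adjoin subset_ring_adjoin] mem_ring_adjoin by blast

lemma inverse_one_minus_mem:
  assumes r: "r \<in> R"
  shows "1 - inverse l * r \<noteq> 0" "inverse (1 - inverse l * r) \<in> R"
proof -
  define a where "a = 1 - inverse l * r"
  have aR: "a \<in> R"
    unfolding a_def using r by (intro diff_mem mult_mem one_mem inverse_mem)
  have l_a: "l * (a - 1) = - r"
    using nonzero by (simp add: a_def mult.assoc[symmetric])
  have a0: "a \<noteq> 0"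
  proof
    assume "a = 0"
    then have "r = l" using l_a by simp
    then show False using r avoids by simp
  qed
  have "inverse a \<in> R"
  proof (rule ccontr)
    assume "inverse a \<notin> R"
    then obtain p where p: "p \<in> polys_over R" "l = poly p (inverse a)"
      using mem_ring_adjoin_if_notin by (auto simp: ring_adjoin_def)
    define N where "N = degree p"
    have "a ^ N * l \<in> R"
      using poly_reflect_poly_nz[OF a0, of p] p poly_mem[OF polys_over_reflect_poly[OF p(1)] aR]
      by (simp add: N_def)
    \<comment> \<open>\<open>a \<equiv> 1\<close> modulo \<open>inverse l * R\<close>, hence \<open>a ^ N * l \<equiv> l\<close> modulo \<open>R\<close>\<close>
    moreover have "a ^ N * l = l - r * (\<Sum>i<N. a ^ i)"
    proof -
      have "a ^ N * l = (1 + (a - 1) * (\<Sum>i<N. a ^ i)) * l"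
        using power_diff_1_eq[of a N] by (simp add: diff_eq_eq)
      also have "\<dots> = l + l * (a - 1) * (\<Sum>i<N. a ^ i)"
        by (simp add: algebra_simps)
      finally show ?thesis using l_a by simp
    qed
    moreover have "r * (\<Sum>i<N. a ^ i) \<in> R"
      using r aR by (intro mult_mem sum_mem power_mem)
    ultimately have "l - r * (\<Sum>i<N. a ^ i) + r * (\<Sum>i<N. a ^ i) \<in> R"
      by (metis add_mem)
    then show False using avoids by simp
  qed
  with a0 show "1 - inverse l * r \<noteq> 0" "inverse (1 - inverse l * r) \<in> R"
    by (simp_all add: a_def)
qed

definition l_expressible :: "'a \<Rightarrow> nat \<Rightarrow> bool" where
  "l_expressible x n \<longleftrightarrow> (\<exists>p \<in> polys_over R. degree p \<le> n \<and> poly p x = l)"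

lemma not_l_expressible_0: "\<not> l_expressible x 0"
  using avoids by (auto simp: l_expressible_def polys_over_def elim!: degree_eq_zeroE)
    (metis coeff_pCons_0)

lemma l_expressible_if_notin: "x \<notin> R \<Longrightarrow> \<exists>n. l_expressible x n"
  using mem_ring_adjoin_if_notin by (fastforce simp: ring_adjoin_def l_expressible_def)

lemma power_eq_poly_lower_degree:
  assumes q: "l_expressible (inverse x) k" and x: "x \<noteq> 0"
  shows "\<exists>s \<in> polys_over R. degree s < k \<and> poly s x = x ^ k"
proof -
  obtain q where q: "q \<in> polys_over R" "degree q \<le> k" "poly q (inverse x) = l"
    using assms unfolding l_expressible_def by blast
  have k: "k \<ge> 1"
    using assms not_l_expressible_0 by (cases k) auto
  have b0: "coeff q 0 \<in> R"
    using q(1) by (simp add: polys_over_def)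
  define u where "u = 1 - inverse l * coeff q 0"
  have u: "u \<noteq> 0" "inverse u \<in> R"
    using inverse_one_minus_mem[OF b0] by (simp_all add: u_def)
  \<comment> \<open>\<open>x ^ k * (l - coeff q 0)\<close> is a polynomial of degree \<open>< k\<close> in \<open>x\<close>, and \<open>l - coeff q 0 = l * u\<close>\<close>
  define s where "s = smult (inverse l * inverse u) (\<Sum>j\<in>{1..k}. monom (coeff q j) (k - j))"
  have "x ^ k * l = (\<Sum>j\<le>k. coeff q j * x ^ (k - j))"
    unfolding q(3)[symmetric] poly_eq_sum_atMost[OF q(2)] sum_distrib_left
    using x by (intro sum.cong) (auto simp: power_diff field_simps)
  also have "\<dots> = coeff q 0 * x ^ k + (\<Sum>j\<in>{1..k}. coeff q j * x ^ (k - j))"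
    by (simp add: atMost_atLeast0 sum.atLeast_Suc_atMost)
  finally have "poly s x = inverse l * inverse u * (x ^ k * (l - coeff q 0))"
    by (simp add: s_def poly_sum poly_monom algebra_simps)
  also have "\<dots> = x ^ k"
    using u(1) nonzero by (simp add: u_def field_simps)
  finally have "poly s x = x ^ k" .
  moreover have "degree s \<le> k - 1"
    unfolding s_def
    by (intro order.trans[OF degree_smult_le] degree_sum_le order.trans[OF degree_monom_le]) auto
  moreover have "s \<in> polys_over R"
    unfolding s_def using q(1) u(2)
    by (intro polys_over_smult polys_over_sum polys_over_monom mult_mem inverse_mem)
      (auto simp: polys_over_def)
  ultimately show ?thesis using k by force
qed

lemma l_expressible_reduce:
  assumes p: "l_expressible x n"
    and s: "s \<in> polys_over R" "degree s < k" "poly s x = x ^ k" and k: "k \<le> n"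
  shows "l_expressible x (n - 1)"
proof -
  obtain p where p: "p \<in> polys_over R" "degree p \<le> n" "poly p x = l"
    using assms unfolding l_expressible_def by blast
  define p' where "p' = p - monom (coeff p n) n + smult (coeff p n) (monom 1 (n - k) * s)"
  have "poly p' x = l"
    using p(3) s(3) k by (simp add: p'_def poly_monom power_add[symmetric])
  moreover have "degree p' \<le> n - 1"
  proof -
    have "degree (p - monom (coeff p n) n) \<le> n - 1"
      using p(2) by (intro degree_le) (auto simp: coeff_eq_0)
    moreover have "degree (smult (coeff p n) (monom 1 (n - k) * s)) \<le> n - 1"
      using s(2) k
      by (intro order.trans[OF degree_smult_le] order.trans[OF degree_mult_le]) (auto simp: degree_monom_eq)
    ultimately show ?thesis
      unfolding p'_def by (intro degree_add_le) auto
  qed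
  moreover have "p' \<in> polys_over R"
    using p(1) s(1) unfolding p'_def
    by (intro polys_over_add polys_over_diff polys_over_monom polys_over_smult polys_over_mult one_mem)
      (auto simp: polys_over_def)
  ultimately show ?thesis
    unfolding l_expressible_def by blast
qed

lemma least_l_expressible_less:
  assumes "x \<notin> R" "inverse x \<notin> R"
  shows "(LEAST n. l_expressible x n) < (LEAST k. l_expressible (inverse x) k)"
proof (rule ccontr)
  define n where "n = (LEAST n. l_expressible x n)"
  define k where "k = (LEAST k. l_expressible (inverse x) k)"
  assume "\<not> n < k"
  have n: "l_expressible x n" and k: "l_expressible (inverse x) k"
    unfolding n_def k_def using l_expressible_if_notin assms by (metis LeastI)+
  have "x \<noteq> 0"
    using assms zero_mem by auto
  then obtain s where "s \<in> polys_over R" "degree s < k" "poly s x = x ^ k"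
    using power_eq_poly_lower_degree[OF k] by blast
  then have "l_expressible x (n - 1)"
    using l_expressible_reduce[OF n] \<open>\<not> n < k\<close> by simp
  then have "n \<le> n - 1"
    unfolding n_def by (rule Least_le)
  then show False
    using n not_l_expressible_0 by (cases n) auto
qed

theorem mem_or_inverse_mem: "x \<in> R \<or> inverse x \<in> R"
  using least_l_expressible_less[of x] least_l_expressible_less[of "inverse x"]
  by (metis inverse_inverse_eq less_asym)

end

section \<open>A valuation ring in which \<open>\<lambda>\<close> is a pole\<close>

lemma transcendental_over_prime_fieldD:
  assumes "transcendental_over_prime_field l" "p \<in> polys_over \<int>" "p \<noteq> 0"
  shows "poly p l \<noteq> 0"
proof -
  obtain p' :: "int poly" where "p = map_poly of_int p'"
    using assms(2) intpolyE unfolding polys_over_def by blast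
  then show ?thesis
    using assms(1,3) unfolding transcendental_over_prime_field_def by blast
qed

definition base_ring :: "'a::field \<Rightarrow> 'a set" where
  "base_ring l = {poly p (inverse l) / of_int b | p b. p \<in> polys_over \<int> \<and> of_int b \<noteq> (0::'a)}"

lemma mem_base_ringI:
  fixes l :: "'a::field"
  shows "p \<in> polys_over \<int> \<Longrightarrow> of_int b \<noteq> (0::'a) \<Longrightarrow> poly p (inverse l) / of_int b \<in> base_ring l"
  unfolding base_ring_def by blast

lemma subring_base_ring: "subring (base_ring (l::'a::field))"
proof
  interpret Ints: subring \<int> by (rule subring_Ints)
  show "0 \<in> base_ring l"
    using mem_base_ringI[OF Ints.polys_over_const[OF Ints_0], of 1 l] by simp
  show "1 \<in> base_ring l"
    using mem_base_ringI[OF Ints.polys_over_const[OF Ints_1], of 1 l] by simp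
  fix x y assume "x \<in> base_ring l" "y \<in> base_ring l"
  then obtain p b p' b' where
    pb: "p \<in> polys_over \<int>" "of_int b \<noteq> (0::'a)" "x = poly p (inverse l) / of_int b"
    and pb': "p' \<in> polys_over \<int>" "of_int b' \<noteq> (0::'a)" "y = poly p' (inverse l) / of_int b'"
    unfolding base_ring_def by blast
  have bb': "of_int (b * b') \<noteq> (0::'a)"
    using pb(2) pb'(2) by simp
  have "x + y = poly (smult (of_int b') p + smult (of_int b) p') (inverse l) / of_int (b * b')"
    using pb pb' by (simp add: field_simps)
  moreover have "smult (of_int b') p + smult (of_int b) p' \<in> polys_over \<int>"
    using pb pb' by (intro Ints.polys_over_add Ints.polys_over_smult) auto
  ultimately show "x + y \<in> base_ring l"
    using mem_base_ringI[OF _ bb'] by metis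
  have "x * y = poly (p * p') (inverse l) / of_int (b * b')"
    using pb pb' by simp
  then show "x * y \<in> base_ring l"
    using mem_base_ringI[OF Ints.polys_over_mult[OF pb(1) pb'(1)] bb'] by metis
next
  interpret Ints: subring \<int> by (rule subring_Ints)
  fix x assume "x \<in> base_ring l"
  then obtain p b where pb: "p \<in> polys_over \<int>" "of_int b \<noteq> (0::'a)" "x = poly p (inverse l) / of_int b"
    unfolding base_ring_def by blast
  then have "- x = poly (- p) (inverse l) / of_int b"
    by simp
  then show "- x \<in> base_ring l"
    using mem_base_ringI[OF Ints.polys_over_uminus[OF pb(1)] pb(2)] by metis
qed

lemma inverse_mem_base_ring: "inverse l \<in> base_ring l"
  using mem_base_ringI[OF subring.polys_over_monom[OF subring_Ints Ints_1], of 1 1 l]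
  by (simp add: poly_monom)

lemma inverse_of_int_mem_base_ring:
  fixes l :: "'a::field"
  shows "of_int b \<noteq> (0::'a) \<Longrightarrow> inverse (of_int b) \<in> base_ring l"
  using mem_base_ringI[OF subring.polys_over_const[OF subring_Ints Ints_1], of b l]
  by (simp add: divide_inverse)

lemma not_mem_base_ring:
  assumes l: "transcendental_over_prime_field l"
  shows "l \<notin> base_ring l"
proof
  interpret Ints: subring \<int> by (rule subring_Ints)
  assume "l \<in> base_ring l"
  then obtain p b where p: "p \<in> polys_over \<int>" "of_int b \<noteq> (0::'a)" "l = poly p (inverse l) / of_int b"
    unfolding base_ring_def by blast
  have l0: "l \<noteq> 0"
    using transcendental_over_prime_fieldD[OF l Ints.polys_over_monom[of 1 1]] by (simp add: poly_monom)
  define d where "d = degree p"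
  define r where "r = monom (of_int b) (Suc d) - reflect_poly p"
  have "coeff r (Suc d) = of_int b"
    using degree_reflect_poly_le[of p] by (simp add: r_def d_def coeff_eq_0)
  then have "r \<noteq> 0"
    using p(2) by auto
  moreover have "r \<in> polys_over \<int>"
    unfolding r_def using p(1) by (intro Ints.polys_over_diff Ints.polys_over_monom Ints.polys_over_reflect_poly) auto
  moreover have "poly r l = 0"
  proof -
    have "of_int b * l = poly p (inverse l)"
      using p(2) p(3)[symmetric] by (simp add: divide_eq_eq mult.commute)
    then show ?thesis
      using poly_reflect_poly_nz[OF l0, of p] by (simp add: r_def d_def poly_monom algebra_simps)
  qed
  ultimately show False
    using transcendental_over_prime_fieldD[OF l] by blast
qed

locale pole_valuation_ring = subring R for R :: "'a::field set" and l :: 'a +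
  assumes mem_or_inverse_mem: "x \<in> R \<or> inverse x \<in> R"
    and inverse_pole_mem: "inverse l \<in> R"
    and pole_notin: "l \<notin> R"
    and inverse_of_int_mem: "of_int b \<noteq> (0::'a) \<Longrightarrow> inverse (of_int b) \<in> R"

theorem exists_pole_valuation_ring:
  assumes "transcendental_over_prime_field l"
  shows "\<exists>R. pole_valuation_ring R l"
proof -
  define \<A> where "\<A> = {S. subring S \<and> base_ring l \<subseteq> S \<and> l \<notin> S}"
  have "base_ring l \<in> \<A>"
    using subring_base_ring not_mem_base_ring[OF assms] by (simp add: \<A>_def)
  moreover have "\<Union>\<C> \<in> \<A>" if "\<C> \<noteq> {}" "subset.chain \<A> \<C>" for \<C>
  proof -
    have "\<C> \<subseteq> \<A>" "\<And>S T. S \<in> \<C> \<Longrightarrow> T \<in> \<C> \<Longrightarrow> S \<subseteq> T \<or> T \<subseteq> S"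
      using that(2) unfolding subset_chain_def by auto
    then show ?thesis
      using that(1) subring_Union_chain[of \<C>] unfolding \<A>_def by auto
  qed
  ultimately obtain R where R: "R \<in> \<A>" "\<And>S. S \<in> \<A> \<Longrightarrow> R \<subseteq> S \<Longrightarrow> S = R"
    using subset_Zorn_nonempty[of \<A>] by blast
  then have R_base: "subring R" "base_ring l \<subseteq> R" "l \<notin> R"
    by (simp_all add: \<A>_def)
  interpret subring R by (fact R_base(1))
  interpret maximal_subring_avoiding R l
  proof
    show "inverse l \<in> R"
      using R_base(2) inverse_mem_base_ring by blast
    show "l \<notin> R" by (fact R_base(3))
    show "S = R" if "subring S" "R \<subseteq> S" "l \<notin> S" for S
      using R(2)[of S] R_base(2) that unfolding \<A>_def by blast
  qed
  have "pole_valuation_ring R l"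
    by unfold_locales
      (use R_base(2) inverse_of_int_mem_base_ring mem_or_inverse_mem inverse_mem avoids in blast)+
  then show ?thesis ..
qed

section \<open>Iterates and multipliers\<close>

lemma funpow_fixed_point: "f x = x \<Longrightarrow> (f ^^ n) x = x"
  by (induction n) simp_all

lemma prod_periodic_orbit_shift:
  fixes g :: "'a \<Rightarrow> 'b::comm_monoid_mult"
  assumes "(f ^^ n) z = z"
  shows "(\<Prod>i<n. g ((f ^^ Suc i) z)) = (\<Prod>i<n. g ((f ^^ i) z))"
proof (cases n)
  case (Suc m)
  then have "(\<Prod>i<n. g ((f ^^ Suc i) z)) = (\<Prod>i<m. g ((f ^^ Suc i) z)) * g z"
    using assms by simp
  also have "\<dots> = (\<Prod>i<n. g ((f ^^ i) z))"
    unfolding Suc prod.lessThan_Suc_shift by (simp add: mult.commute)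
  finally show ?thesis .
qed simp

lemma prod_cycle_factor_eq_one:
  fixes f :: "'a::field \<Rightarrow> 'a"
  assumes f: "\<And>z. f z = l * (z * g z)" and per: "(f ^^ n) z0 = z0" and z0: "z0 \<noteq> 0"
  shows "l ^ n * (\<Prod>i<n. g ((f ^^ i) z0)) = 1"
proof -
  define z where "z i = (f ^^ i) z0" for i
  have "z i \<noteq> 0" if "i < n" for i
  proof
    assume "z i = 0"
    have "z0 = (f ^^ (n - i)) (z i)"
      using per that unfolding z_def by (metis funpow_add comp_apply le_add_diff_inverse2 less_imp_le)
    then show False
      using z0 \<open>z i = 0\<close> funpow_fixed_point[of f 0] f by simp
  qed
  then have Z: "(\<Prod>i<n. z i) \<noteq> 0"
    by simp
  have "(\<Prod>i<n. z i) = (\<Prod>i<n. f (z i))"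
    using prod_periodic_orbit_shift[OF per, of "\<lambda>x. x"] by (simp add: z_def)
  also have "\<dots> = (l ^ n * (\<Prod>i<n. g (z i))) * (\<Prod>i<n. z i)"
    unfolding f prod.distrib prod_constant card_lessThan by (simp only: mult_ac)
  finally show ?thesis
    using Z by (simp add: z_def)
qed

lemma poly_poly_iter: "poly (poly_iter P n) = poly P ^^ n"
  by (induction n) (simp_all add: poly_iter_def poly_pcompose fun_eq_iff)

lemma poly_pderiv_poly_iter:
  fixes P :: "'a::idom poly"
  shows "poly (pderiv (poly_iter P n)) z = (\<Prod>i<n. poly (pderiv P) ((poly P ^^ i) z))"
proof (induction n)
  case 0
  then show ?case by (simp add: poly_iter_def pderiv_pCons)
next
  case (Suc n)
  have "poly_iter P (Suc n) = pcompose P (poly_iter P n)"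
    by (simp add: poly_iter_def)
  then show ?case
    using Suc by (simp add: pderiv_pcompose poly_pcompose poly_poly_iter mult.commute)
qed

lemma parabolic_periodic_pointE:
  assumes "parabolic_periodic_point P z0"
  obtains n where "n \<ge> 1" "(poly P ^^ n) z0 = z0"
    "root_of_unity (\<Prod>i<n. poly (pderiv P) ((poly P ^^ i) z0))"
  using assms unfolding parabolic_periodic_point_def poly_pderiv_poly_iter poly_poly_iter by blast

lemma poly_smult_X_mult:
  fixes G :: "'a::comm_ring_1 poly"
  shows "poly (smult l ([:0, 1:] * G)) z = l * (z * poly G z)"
  by (simp add: mult_ac)

lemma poly_pderiv_smult_X_mult:
  fixes G :: "'a::idom poly"
  shows "poly (pderiv (smult l ([:0, 1:] * G))) z = l * (poly G z + z * poly (pderiv G) z)"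
  by (simp add: pderiv_mult pderiv_smult pderiv_pCons algebra_simps)

lemma X_mult_poly_pderiv_monom:
  fixes z :: "'a::idom"
  shows "z * poly (pderiv (monom 1 k)) z = of_nat k * z ^ k"
  by (cases k) (simp_all add: pderiv_monom poly_monom mult_ac)

lemma poly_binomial:
  fixes l :: "'a::idom"
  shows "poly (smult l ([:0, 1:] * (1 + monom 1 q))) = (\<lambda>z. l * (z * (1 + z ^ q)))"
  by (simp add: fun_eq_iff poly_smult_X_mult poly_monom)

lemma poly_pderiv_binomial:
  fixes l :: "'a::idom"
  shows "poly (pderiv (smult l ([:0, 1:] * (1 + monom 1 q)))) z = l * (1 + z ^ q + of_nat q * z ^ q)"
  using X_mult_poly_pderiv_monom[of z q]
  unfolding poly_pderiv_smult_X_mult by (simp add: poly_monom pderiv_add)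

lemma poly_trinomial:
  fixes l :: "'a::idom"
  shows "poly (smult l ([:0, 1:] * (1 + monom 1 q + monom 1 (2 * q))))
    = (\<lambda>z. l * (z * (1 + z ^ q + z ^ (2 * q))))"
  by (simp add: fun_eq_iff poly_smult_X_mult poly_monom)

lemma poly_pderiv_trinomial:
  fixes l :: "'a::idom"
  shows "poly (pderiv (smult l ([:0, 1:] * (1 + monom 1 q + monom 1 (2 * q))))) z
    = l * (1 + z ^ q + z ^ (2 * q) + (of_nat q * z ^ q + of_nat (2 * q) * z ^ (2 * q)))"
  using X_mult_poly_pderiv_monom[of z q] X_mult_poly_pderiv_monom[of z "2 * q"]
  unfolding poly_pderiv_smult_X_mult by (simp add: poly_monom pderiv_add distrib_left)

lemma trinomial_char_3_factorization:
  fixes y :: "'a::comm_ring_1"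
  assumes "(3::'a) = 0" "q \<ge> 1"
  shows "1 + y + y ^ 2 = (1 - y) ^ 2"
    and "1 + y + y ^ 2 + (of_nat q * y + of_nat (2 * q) * y ^ 2) = (1 - y) * (1 + of_nat (q - 1) * y)"
proof -
  have "1 + y + y ^ 2 = (1 - y) ^ 2 + 3 * y"
    by (simp add: algebra_simps power2_eq_square)
  then show "1 + y + y ^ 2 = (1 - y) ^ 2"
    using assms(1) by simp
  have "1 + y + y ^ 2 + (of_nat q * y + of_nat (2 * q) * y ^ 2)
      = (1 - y) * (1 + of_nat (q - 1) * y) + 3 * (y + of_nat q * y ^ 2)"
    using assms(2) by (simp add: of_nat_diff algebra_simps power2_eq_square)
  then show "1 + y + y ^ 2 + (of_nat q * y + of_nat (2 * q) * y ^ 2) = (1 - y) * (1 + of_nat (q - 1) * y)"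
    using assms(1) by simp
qed

section \<open>Dynamics over the valuation ring\<close>

context pole_valuation_ring
begin

definition R_unit :: "'a \<Rightarrow> bool" where
  "R_unit x \<longleftrightarrow> x \<in> R \<and> x \<noteq> 0 \<and> inverse x \<in> R"

definition R_nonunit :: "'a \<Rightarrow> bool" where
  "R_nonunit x \<longleftrightarrow> x \<in> R \<and> \<not> R_unit x"

lemma pole_nonzero: "l \<noteq> 0"
  using pole_notin zero_mem by auto

lemma R_unit_or_nonunit: "x \<in> R \<Longrightarrow> R_unit x \<or> R_nonunit x"
  by (simp add: R_nonunit_def)

lemma R_unit_one: "R_unit 1"
  by (simp add: R_unit_def one_mem)

lemma R_unit_mult: "R_unit x \<Longrightarrow> R_unit y \<Longrightarrow> R_unit (x * y)"
  by (simp add: R_unit_def mult_mem)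

lemma R_unit_power: "R_unit x \<Longrightarrow> R_unit (x ^ n)"
  by (induction n) (simp_all add: R_unit_one R_unit_mult)

lemma R_unit_prod: "(\<And>i. i \<in> A \<Longrightarrow> R_unit (f i)) \<Longrightarrow> R_unit (prod f A)"
  by (induction A rule: infinite_finite_induct) (simp_all add: R_unit_one R_unit_mult)

lemma R_unit_of_nat: "of_nat n \<noteq> (0::'a) \<Longrightarrow> R_unit (of_nat n)"
  using inverse_of_int_mem[of "int n"] of_nat_mem by (simp add: R_unit_def)

lemma R_nonunit_mult:
  assumes x: "R_nonunit x" and y: "y \<in> R"
  shows "R_nonunit (y * x)"
proof -
  have "\<not> R_unit (y * x)"
  proof
    assume yx: "R_unit (y * x)"
    then have "inverse x = y * inverse (y * x)"
      by (simp add: R_unit_def field_simps)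
    then have "inverse x \<in> R"
      using yx y mult_mem by (metis R_unit_def)
    then show False
      using x yx by (auto simp: R_nonunit_def R_unit_def)
  qed
  then show ?thesis
    using x y mult_mem by (simp add: R_nonunit_def)
qed

lemma R_nonunit_power: "R_nonunit x \<Longrightarrow> n \<ge> 1 \<Longrightarrow> R_nonunit (x ^ n)"
  using R_nonunit_mult[of x "x ^ (n - 1)"] power_mem[of x "n - 1"]
  by (cases n) (auto simp: R_nonunit_def mult.commute)

lemma R_nonunit_add_if_divide_mem:
  assumes x: "R_nonunit x" and "x \<noteq> 0" "y / x \<in> R"
  shows "R_nonunit (x + y)"
proof -
  have "x + y = (1 + y / x) * x"
    using assms(2) by (simp add: field_simps)
  then show ?thesis
    using R_nonunit_mult[OF x add_mem[OF one_mem assms(3)]] by simp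
qed

lemma R_nonunit_add:
  assumes x: "R_nonunit x" and y: "R_nonunit y"
  shows "R_nonunit (x + y)"
proof (cases "x = 0 \<or> y = 0")
  case False
  then show ?thesis
    using mem_or_inverse_mem[of "y / x"] R_nonunit_add_if_divide_mem[OF x] R_nonunit_add_if_divide_mem[OF y]
    by (metis add.commute inverse_divide)
qed (use x y in auto)

lemma R_nonunit_uminus: "R_nonunit x \<Longrightarrow> R_nonunit (- x)"
  using R_nonunit_mult[of x "- 1"] uminus_mem[OF one_mem] by simp

lemma R_nonunit_diff: "R_nonunit x \<Longrightarrow> R_nonunit y \<Longrightarrow> R_nonunit (x - y)"
  using R_nonunit_add[of x "- y"] R_nonunit_uminus[of y] by simp

lemma R_unit_add_nonunit:
  assumes x: "R_unit x" and y: "R_nonunit y"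
  shows "R_unit (x + y)"
proof (rule ccontr)
  assume "\<not> R_unit (x + y)"
  moreover have "x + y \<in> R"
    using x y add_mem by (simp add: R_unit_def R_nonunit_def)
  ultimately have "R_nonunit (x + y - y)"
    using y R_nonunit_diff R_unit_or_nonunit by blast
  then show False
    using x by (simp add: R_nonunit_def)
qed

lemma R_nonunit_inverse_if_notin: "z \<notin> R \<Longrightarrow> R_nonunit (inverse z)"
  using mem_or_inverse_mem[of z] by (auto simp: R_nonunit_def R_unit_def)

lemma R_nonunit_inverse_pole: "R_nonunit (inverse l)"
  by (rule R_nonunit_inverse_if_notin[OF pole_notin])

lemma pole_mult_unit_notin:
  assumes "R_unit u"
  shows "l * u \<notin> R"
proof
  assume "l * u \<in> R"
  moreover have "l = l * u * inverse u"
    using assms by (simp add: R_unit_def)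
  ultimately show False
    using assms mult_mem[of "l * u" "inverse u"] pole_notin by (metis R_unit_def)
qed

lemma pole_power_notin:
  assumes "k \<ge> 1"
  shows "l ^ k \<notin> R"
proof
  assume "l ^ k \<in> R"
  moreover have "l = l ^ k * inverse l ^ (k - 1)"
    using assms pole_nonzero by (cases k) (simp_all add: power_inverse)
  ultimately show False
    using mult_mem[OF _ power_mem[OF inverse_pole_mem]] pole_notin by metis
qed

lemma not_root_of_unity_pole_power_mult_unit:
  assumes u: "R_unit u" and k: "k \<ge> 1"
  shows "\<not> root_of_unity (l ^ k * u)"
proof
  assume "root_of_unity (l ^ k * u)"
  then obtain m where m: "m > 0" "(l ^ k * u) ^ m = 1"
    unfolding root_of_unity_def by blast
  then have "l ^ (k * m) = inverse (u ^ m)"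
    by (intro inverse_unique[symmetric]) (simp add: power_mult_distrib power_mult mult.commute)
  moreover have "inverse (u ^ m) \<in> R"
    using R_unit_power[OF u] by (simp add: R_unit_def)
  ultimately show False
    using pole_power_notin[of "k * m"] k m(1) by simp
qed

definition escaping :: "('a \<Rightarrow> 'a) \<Rightarrow> bool" where
  "escaping f \<longleftrightarrow> (\<forall>z. z \<notin> R \<longrightarrow> (\<exists>e g. R_unit g \<and> f z = l * z ^ Suc e * g))"

lemma escape_step:
  assumes z: "z \<notin> R" and g: "R_unit g"
  shows "l * z ^ Suc e * g \<notin> R"
    and "\<exists>t. R_nonunit t \<and> inverse (l * z ^ Suc e * g) = inverse z * t"
proof -
  have z0: "z \<noteq> 0"
    using z zero_mem by auto
  define t where "t = inverse z ^ e * inverse g * inverse l"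
  have t: "R_nonunit t"
    unfolding t_def using g R_nonunit_inverse_if_notin[OF z]
    by (intro R_nonunit_mult[OF R_nonunit_inverse_pole] mult_mem power_mem)
      (auto simp: R_unit_def R_nonunit_def)
  have inv: "inverse (l * z ^ Suc e * g) = inverse z * t"
    by (simp add: t_def power_inverse field_simps)
  show "\<exists>t. R_nonunit t \<and> inverse (l * z ^ Suc e * g) = inverse z * t"
    using t inv by blast
  \<comment> \<open>otherwise \<open>inverse z * t\<close> would be a unit of \<open>R\<close> lying in the maximal ideal\<close>
  show "l * z ^ Suc e * g \<notin> R"
  proof
    assume "l * z ^ Suc e * g \<in> R"
    moreover have "l * z ^ Suc e * g \<noteq> 0"
      using z0 g pole_nonzero by (simp add: R_unit_def)
    moreover have "R_nonunit (inverse z * t)"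
      using R_nonunit_mult[OF t] R_nonunit_inverse_if_notin[OF z] by (simp add: R_nonunit_def)
    ultimately show False
      unfolding inv[symmetric] R_nonunit_def R_unit_def by simp
  qed
qed

lemma escaping_iterates:
  assumes escape: "escaping f"
    and w: "w \<notin> R"
  shows "(f ^^ Suc j) w \<notin> R \<and> (\<exists>T. R_nonunit T \<and> inverse ((f ^^ Suc j) w) = inverse w * T)"
proof (induction j)
  case 0
  from escape w obtain e g where "R_unit g" "f w = l * w ^ Suc e * g"
    unfolding escaping_def by blast
  then show ?case
    using escape_step[OF w] by simp
next
  case (Suc j)
  define y where "y = (f ^^ Suc j) w"
  obtain T where y: "y \<notin> R" and T: "R_nonunit T" "inverse y = inverse w * T"
    using Suc.IH unfolding y_def by blast
  from escape y obtain e g where "R_unit g" "f y = l * y ^ Suc e * g"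
    unfolding escaping_def by blast
  then obtain t where "f y \<notin> R" "R_nonunit t" "inverse (f y) = inverse y * t"
    using escape_step[OF y] by metis
  moreover have "R_nonunit (t * T)"
    using R_nonunit_mult[OF T(1)] \<open>R_nonunit t\<close> by (simp add: R_nonunit_def)
  ultimately show ?case
    using T(2) unfolding y_def by (auto simp: mult.assoc mult.commute)
qed

lemma periodic_orbit_mem:
  assumes escape: "escaping f"
    and per: "(f ^^ n) z0 = z0" and n: "n \<ge> 1"
  shows "(f ^^ k) z0 \<in> R"
proof (rule ccontr)
  define w where "w = (f ^^ k) z0"
  assume "(f ^^ k) z0 \<notin> R"
  then have w: "w \<notin> R" "w \<noteq> 0"
    using zero_mem by (auto simp: w_def)
  have "(f ^^ n) w = w"
    using per unfolding w_def by (metis comp_apply funpow_add add.commute)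
  then obtain T where "R_nonunit T" "inverse w = inverse w * T"
    using escaping_iterates[OF escape w(1), of "n - 1"] n by auto
  then show False
    using w(2) R_unit_one by (simp add: R_nonunit_def)
qed

lemma not_root_of_unity_multiplier:
  assumes escape: "escaping f"
    and deriv: "\<And>z. z \<in> R \<Longrightarrow> f z \<in> R \<Longrightarrow> R_unit (D z / l)"
    and per: "(f ^^ n) z0 = z0" and n: "n \<ge> 1"
  shows "\<not> root_of_unity (\<Prod>i<n. D ((f ^^ i) z0))"
proof -
  have "(\<Prod>i<n. D ((f ^^ i) z0)) = (\<Prod>i<n. l * (D ((f ^^ i) z0) / l))"
    using pole_nonzero by simp
  also have "\<dots> = l ^ n * (\<Prod>i<n. D ((f ^^ i) z0) / l)"
    by (simp only: prod.distrib prod_constant card_lessThan)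
  finally have "(\<Prod>i<n. D ((f ^^ i) z0)) = l ^ n * (\<Prod>i<n. D ((f ^^ i) z0) / l)" .
  moreover have "R_unit (D ((f ^^ i) z0) / l)" for i
    using deriv periodic_orbit_mem[OF escape per n, of i] periodic_orbit_mem[OF escape per n, of "Suc i"]
    by simp
  ultimately show ?thesis
    using not_root_of_unity_pole_power_mult_unit[OF R_unit_prod n] by metis
qed

lemma not_root_of_unity_multiplier_square_factor:
  assumes escape: "escaping f"
    and f: "\<And>z. f z = l * (z * h z ^ 2)" and D: "\<And>z. D z = l * (h z * c z)" and h0: "h 0 = 1"
    and c: "\<And>z. z \<in> R \<Longrightarrow> f z \<in> R \<Longrightarrow> R_unit (c z)"
    and per: "(f ^^ n) z0 = z0" and n: "n \<ge> 1"
  shows "\<not> root_of_unity (\<Prod>i<n. D ((f ^^ i) z0))"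
proof
  define z where "z i = (f ^^ i) z0" for i
  define M where "M = (\<Prod>i<n. D (z i))"
  assume "root_of_unity (\<Prod>i<n. D ((f ^^ i) z0))"
  then obtain m where m: "m > 0" "M ^ m = 1"
    unfolding root_of_unity_def M_def z_def by blast
  have "R_unit (c (z i))" for i
    using c periodic_orbit_mem[OF escape per n, of i] periodic_orbit_mem[OF escape per n, of "Suc i"]
    by (simp add: z_def)
  then have C: "R_unit (\<Prod>i<n. c (z i))"
    by (rule R_unit_prod)
  show False
  proof (cases "z0 = 0")
    case True
    then have "z i = 0" for i
      using funpow_fixed_point[of f 0] f by (simp add: z_def)
    then have "M = l ^ n * (\<Prod>i<n. c (z i))"
      using D h0 by (simp add: M_def power_mult_distrib)
    then show False
      using not_root_of_unity_pole_power_mult_unit[OF C n] m unfolding root_of_unity_def by blast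
  next
    case False
    have H: "l ^ n * (\<Prod>i<n. h (z i) ^ 2) = 1"
      using prod_cycle_factor_eq_one[OF f per False] by (simp add: z_def)
    have "M ^ 2 = l ^ n * (l ^ n * (\<Prod>i<n. h (z i) ^ 2)) * (\<Prod>i<n. c (z i)) ^ 2"
      unfolding M_def D prod.distrib prod_constant card_lessThan prod_power_distrib
      by (simp only: power_mult_distrib power2_eq_square prod.distrib mult_ac)
    then have "M ^ 2 = l ^ n * (\<Prod>i<n. c (z i)) ^ 2"
      using H by simp
    moreover have "root_of_unity (M ^ 2)"
      unfolding root_of_unity_def using m by (metis power_mult mult.commute power_one)
    ultimately show False
      using not_root_of_unity_pole_power_mult_unit[OF R_unit_power[OF C] n] by simp
  qed
qed

lemma R_nonunit_if_pole_mult_mem: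
  assumes "R_unit z" "g \<in> R" "l * (z * g) \<in> R"
  shows "R_nonunit g"
  using assms R_unit_or_nonunit pole_mult_unit_notin R_unit_mult by blast

lemma R_unit_one_add_nonunit: "R_nonunit x \<Longrightarrow> R_unit (1 + x)"
  by (rule R_unit_add_nonunit[OF R_unit_one])

lemma escaping_binomial:
  assumes q: "q \<ge> 1"
  shows "escaping (\<lambda>z. l * (z * (1 + z ^ q)))"
  unfolding escaping_def
proof (intro allI impI exI conjI)
  fix z assume z: "z \<notin> R"
  have w: "R_nonunit (inverse z)" and z0: "z \<noteq> 0"
    using R_nonunit_inverse_if_notin[OF z] z zero_mem by auto
  show "R_unit (1 + inverse z ^ q)"
    using R_unit_one_add_nonunit[OF R_nonunit_power[OF w q]] .
  show "l * (z * (1 + z ^ q)) = l * z ^ Suc q * (1 + inverse z ^ q)"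
    using z0 by (simp add: power_inverse field_simps)
qed

lemma escaping_trinomial:
  assumes q: "q \<ge> 1"
  shows "escaping (\<lambda>z. l * (z * (1 + z ^ q + z ^ (2 * q))))"
  unfolding escaping_def
proof (intro allI impI exI conjI)
  fix z assume z: "z \<notin> R"
  have w: "R_nonunit (inverse z)" and z0: "z \<noteq> 0"
    using R_nonunit_inverse_if_notin[OF z] z zero_mem by auto
  show "R_unit (1 + (inverse z ^ q + inverse z ^ (2 * q)))"
    using q by (intro R_unit_one_add_nonunit R_nonunit_add R_nonunit_power[OF w]) auto
  show "l * (z * (1 + z ^ q + z ^ (2 * q))) = l * z ^ Suc (2 * q) * (1 + (inverse z ^ q + inverse z ^ (2 * q)))"
    using z0 by (simp add: power_inverse field_simps power_mult power2_eq_square)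
qed

lemma multiplier_unit_binomial:
  assumes z: "z \<in> R" and fz: "l * (z * (1 + z ^ q)) \<in> R" and q: "q \<ge> 1" "R_unit (of_nat q)"
  shows "R_unit (1 + z ^ q + of_nat q * z ^ q)"
proof (cases "R_unit z")
  case True
  then have y: "R_unit (z ^ q)"
    by (rule R_unit_power)
  have "R_nonunit (1 + z ^ q)"
    using R_nonunit_if_pole_mult_mem[OF True _ fz] y add_mem one_mem by (simp add: R_unit_def)
  then show ?thesis
    using R_unit_add_nonunit[OF R_unit_mult[OF q(2) y]] by (simp add: add.commute)
next
  case False
  then have "R_nonunit (z ^ q)"
    using z q(1) R_unit_or_nonunit R_nonunit_power by blast
  then show ?thesis
    using R_unit_one_add_nonunit R_nonunit_add R_nonunit_mult of_nat_mem by (simp add: add.assoc)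
qed

lemma R_unit_one_add_two_mult:
  assumes y: "y \<in> R" and g: "R_nonunit (1 + y + y ^ 2)" and three: "(3::'a) \<noteq> 0"
  shows "R_unit (1 + 2 * y)"
proof (rule ccontr)
  assume "\<not> R_unit (1 + 2 * y)"
  then have "R_nonunit (1 + 2 * y)"
    using R_unit_or_nonunit y by (metis add_mem one_mem mult_mem of_nat_mem of_nat_numeral)
  then have "R_nonunit (4 * (1 + y + y ^ 2) - (1 + 2 * y) ^ 2)"
    using g by (intro R_nonunit_diff R_nonunit_power R_nonunit_mult) (auto intro: of_nat_mem[of 4, simplified])
  moreover have "4 * (1 + y + y ^ 2) - (1 + 2 * y) ^ 2 = (3::'a)"
    by (simp add: algebra_simps power2_eq_square)
  ultimately have "R_nonunit (3::'a)"
    by metis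
  moreover have "R_unit (3::'a)"
    using R_unit_of_nat[of 3] three by simp
  ultimately show False
    by (simp add: R_nonunit_def)
qed

lemma multiplier_unit_trinomial:
  assumes z: "z \<in> R" and fz: "l * (z * (1 + z ^ q + z ^ (2 * q))) \<in> R"
    and q: "q \<ge> 1" "R_unit (of_nat q)" and three: "(3::'a) \<noteq> 0"
  shows "R_unit (1 + z ^ q + z ^ (2 * q) + (of_nat q * z ^ q + of_nat (2 * q) * z ^ (2 * q)))"
proof (cases "R_unit z")
  case True
  define y where "y = z ^ q"
  have y: "R_unit y" "y \<in> R" and z2: "z ^ (2 * q) = y ^ 2"
    using R_unit_power[OF True] by (auto simp: y_def R_unit_def power_mult mult.commute)
  have "1 + y + y ^ 2 \<in> R"
    using y(2) by (intro add_mem one_mem power_mem)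
  then have g: "R_nonunit (1 + y + y ^ 2)"
    using R_nonunit_if_pole_mult_mem[OF True _ fz[unfolded z2 y_def[symmetric]]] by blast
  have "R_unit (1 + 2 * y)"
    using R_unit_one_add_two_mult[OF y(2) g three] .
  moreover have "1 + z ^ q + z ^ (2 * q) + (of_nat q * z ^ q + of_nat (2 * q) * z ^ (2 * q))
      = of_nat q * y * (1 + 2 * y) + (1 + y + y ^ 2)"
    unfolding z2 y_def[symmetric] by (simp add: algebra_simps power2_eq_square)
  ultimately show ?thesis
    using R_unit_add_nonunit[OF R_unit_mult[OF R_unit_mult[OF q(2) y(1)]] g] by metis
next
  case False
  then have w: "R_nonunit z"
    using z R_unit_or_nonunit by blast
  have "R_nonunit (z ^ q)" "R_nonunit (z ^ (2 * q))"
    using q(1) by (auto intro: R_nonunit_power[OF w])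
  then show ?thesis
    unfolding add.assoc
    by (intro R_unit_one_add_nonunit R_nonunit_add R_nonunit_mult of_nat_mem)
qed

lemma multiplier_factor_unit_trinomial_char_3:
  assumes z: "z \<in> R" and fz: "l * (z * (1 + z ^ q + z ^ (2 * q))) \<in> R"
    and q: "q \<ge> 1" "R_unit (of_nat q)" and three: "(3::'a) = 0"
  shows "R_unit (1 + of_nat (q - 1) * z ^ q)"
proof (cases "R_unit z")
  case True
  define y where "y = z ^ q"
  have y: "y \<in> R" and z2: "z ^ (2 * q) = y ^ 2"
    using R_unit_power[OF True] by (auto simp: y_def R_unit_def power_mult mult.commute)
  have "1 + y + y ^ 2 = (y - 1) ^ 2 + 3 * y"
    by (simp add: algebra_simps power2_eq_square)
  then have "R_nonunit ((y - 1) ^ 2)"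
    using R_nonunit_if_pole_mult_mem[OF True _ fz[unfolded z2 y_def[symmetric]]] y three
    by (simp add: power_mem diff_mem one_mem)
  then have "R_nonunit (y - 1)"
    using R_unit_or_nonunit[OF diff_mem[OF y one_mem]] R_unit_power by (auto simp: R_nonunit_def)
  moreover have "1 + of_nat (q - 1) * y = of_nat q + of_nat (q - 1) * (y - 1)"
    using q(1) by (simp add: of_nat_diff algebra_simps)
  ultimately show ?thesis
    using R_unit_add_nonunit[OF q(2) R_nonunit_mult] of_nat_mem by (simp add: y_def)
next
  case False
  then have "R_nonunit (z ^ q)"
    using z q(1) R_unit_or_nonunit R_nonunit_power by blast
  then show ?thesis
    using R_unit_one_add_nonunit R_nonunit_mult of_nat_mem by simp
qed

lemma not_parabolic_binomial:
  assumes q: "q \<ge> 1" "of_nat q \<noteq> (0::'a)"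
  shows "\<not> parabolic_periodic_point (smult l ([:0, 1:] * (1 + monom 1 q))) z0"
proof
  define P where "P = smult l ([:0, 1:] * (1 + monom 1 q))"
  assume "parabolic_periodic_point (smult l ([:0, 1:] * (1 + monom 1 q))) z0"
  then obtain n where n: "n \<ge> 1" "(poly P ^^ n) z0 = z0"
    and ru: "root_of_unity (\<Prod>i<n. poly (pderiv P) ((poly P ^^ i) z0))"
    unfolding P_def[symmetric] by (rule parabolic_periodic_pointE)
  have "R_unit (poly (pderiv P) z / l)" if "z \<in> R" "poly P z \<in> R" for z
    using multiplier_unit_binomial[OF that[unfolded P_def poly_binomial] q(1) R_unit_of_nat[OF q(2)]]
      pole_nonzero
    unfolding P_def poly_pderiv_binomial by simp
  moreover have "escaping (poly P)"
    unfolding P_def poly_binomial using escaping_binomial[OF q(1)] .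
  ultimately show False
    using not_root_of_unity_multiplier[OF _ _ n(2) n(1)] ru by blast
qed

lemma not_parabolic_trinomial:
  assumes q: "q \<ge> 1" "of_nat q \<noteq> (0::'a)"
  shows "\<not> parabolic_periodic_point (smult l ([:0, 1:] * (1 + monom 1 q + monom 1 (2 * q)))) z0"
proof
  define P where "P = smult l ([:0, 1:] * (1 + monom 1 q + monom 1 (2 * q)))"
  assume "parabolic_periodic_point (smult l ([:0, 1:] * (1 + monom 1 q + monom 1 (2 * q)))) z0"
  then obtain n where n: "n \<ge> 1" "(poly P ^^ n) z0 = z0"
    and ru: "root_of_unity (\<Prod>i<n. poly (pderiv P) ((poly P ^^ i) z0))"
    unfolding P_def[symmetric] by (rule parabolic_periodic_pointE)
  have f: "poly P z = l * (z * (1 + z ^ q + z ^ (2 * q)))" for z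
    unfolding P_def poly_trinomial ..
  have escape: "escaping (poly P)"
    unfolding P_def poly_trinomial using escaping_trinomial[OF q(1)] .
  show False
  proof (cases "(3::'a) = 0")
    case False
    have "R_unit (poly (pderiv P) z / l)" if "z \<in> R" "poly P z \<in> R" for z
      using multiplier_unit_trinomial[OF that[unfolded f] q(1) R_unit_of_nat[OF q(2)] False] pole_nonzero
      unfolding P_def poly_pderiv_trinomial by simp
    then show False
      using not_root_of_unity_multiplier[OF escape _ n(2) n(1)] ru by blast
  next
    case True
    define h where "h z = 1 - z ^ q" for z :: 'a
    define c where "c z = 1 + of_nat (q - 1) * z ^ q" for z :: 'a
    have "poly P z = l * (z * h z ^ 2)" for z
      using trinomial_char_3_factorization(1)[OF True q(1), of "z ^ q"]
      unfolding f h_def by (simp add: power_mult mult.commute[of 2])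
    moreover have "poly (pderiv P) z = l * (h z * c z)" for z
      using trinomial_char_3_factorization(2)[OF True q(1), of "z ^ q"]
      unfolding P_def poly_pderiv_trinomial h_def c_def by (simp add: power_mult mult.commute[of 2])
    moreover have "R_unit (c z)" if "z \<in> R" "poly P z \<in> R" for z
      unfolding c_def
      using multiplier_factor_unit_trinomial_char_3[OF that[unfolded f] q(1) R_unit_of_nat[OF q(2)] True] .
    moreover have "h 0 = 1"
      using q(1) by (simp add: h_def)
    ultimately show False
      using not_root_of_unity_multiplier_square_factor[OF escape _ _ _ _ n(2) n(1)] ru by blast
  qed
qed

end

theorem lemma5p9:
  fixes l :: "'a::field" and q :: nat and P :: "'a poly"
  assumes "transcendental_over_prime_field l"
    and "q \<ge> 1"
    and "CHAR('a) > 0 \<longrightarrow> \<not> CHAR('a) dvd q"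
    and "P = smult l ([:0, 1:] * (1 + monom 1 q))
         \<or> P = smult l ([:0, 1:] * (1 + monom 1 q + monom 1 (2 * q)))"
  shows "\<not> (\<exists>z0::'a. parabolic_periodic_point P z0)"
proof -
  obtain R where "pole_valuation_ring R l"
    using exists_pole_valuation_ring[OF assms(1)] by blast
  then interpret pole_valuation_ring R l .
  have "of_nat q \<noteq> (0::'a)"
    using assms(2,3) by (auto simp: of_nat_eq_0_iff_char_dvd)
  then show ?thesis
    using assms(4) not_parabolic_binomial[OF assms(2)] not_parabolic_trinomial[OF assms(2)] by blast
qed

end
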